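(* Let $\Omega$ be a semigroup, $(\mathcal{A},\{\mu^1,\mu^2,\dots\})$ an $A_\infty$-algebra and $\{\mathcal{R}_\alpha:\mathcal{A}\to\mathcal{A}\}_{\alpha\in\Omega}$ a homotopy Rota-Baxter family on $\mathcal{A}$. Then $(\mathcal{A},\{\eta^1,\eta^2,\dots\})$ is a $Dend_\infty$-family algebra, where $\eta^k=(\eta^{k,[1]},\dots,\eta^{k,[k]})$ with $\eta^{k,[r]}_{\alpha_1,\dots,\alpha_k}(a_1,\dots,a_k):=\mu^k\big(\mathcal{R}_{\alpha_1}(a_1),\dots,\mathcal{R}_{\alpha_{r-1}}(a_{r-1}),a_r,\mathcal{R}_{\alpha_{r+1}}(a_{r+1}),\dots,\mathcal{R}_{\alpha_k}(a_k)\big)$ for $[r]\in C_k$, $\alpha_j\in\Omega$, $a_j\in\mathcal{A}$.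
   Context: $\mathbf{k}$ is a commutative unital ring of characteristic $0$; $\Omega$ a semigroup; $\mathcal{A}=\oplus_{i\in\mathbb{Z}}\mathcal{A}^i$ graded. Sign $\pm:=(-1)^{i(n+1)+n(|a_1|+\cdots+|a_{i-1}|)}$. An $A_\infty$-algebra is $\mathcal{A}$ with multilinear maps $\mu^k:\mathcal{A}^{\otimes k}\to\mathcal{A}$ of degree $k-2$, $k\ge1$, with $\sum_{m+n=N+1}\sum_{i=1}^m\pm\,\mu^m(a_1,\dots,a_{i-1},\mu^n(a_i,\dots,a_{i+n-1}),a_{i+n},\dots,a_N)=0$ for all $N\ge1$ and homogeneous $a_j$. A homotopy Rota-Baxter family on it is a collection $\{\mathcal{R}_\alpha\}_{\alpha\in\Omega}$ of degree-$0$ linear maps with $\mu^k(\mathcal{R}_{\alpha_1}(a_1),\dots,\mathcal{R}_{\alpha_k}(a_k))=\sum_{r=1}^k\mathcal{R}_{\alpha_1\cdots\alpha_k}\big(\mu^k(\mathcal{R}_{\alpha_1}(a_1),\dots,a_r,\dots,\mathcal{R}_{\alpha_k}(a_k))\big)$ (the $r$-th argument left without $\mathcal{R}$) for all $k\ge1$, $a_j\in\mathcal{A}$, $\alpha_j\in\Omega$. $C_k=\{[1],\dots,[k]\}$ formal symbols. For $m,n\ge1$, $1\le i\le m$, $1\le r\le m+n-1$: $R_0[r]$ is $[r]$ if $r\le i-1$, $[i]$ if $i\le r\le i+n-1$, $[r-n+1]$ if $r\ge i+n$; $R_i[r]$ is $[r-i+1]$ if $i\le r\le i+n-1$ and $[1]+\cdots+[n]$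 otherwise, with $\eta^{n,[1]+\cdots+[n]}:=\sum_s\eta^{n,[s]}$. A $Dend_\infty$-family algebra is $\mathcal{A}$ with, for each $k\ge1$, $\eta^k=(\eta^{k,[1]},\dots,\eta^{k,[k]})$, each $\eta^{k,[r]}=\{\eta^{k,[r]}_{\alpha_1,\dots,\alpha_k}:\mathcal{A}^{\otimes k}\to\mathcal{A}\}_{\alpha_j\in\Omega}$ multilinear of degree $k-2$ with $\eta^{k,[r]}_{\alpha_1,\dots,\alpha_k}$ independent of $\alpha_r$, satisfying for all $N\ge1$, $[r]\in C_N$, homogeneous $a_j$, $\alpha_j\in\Omega$: $\sum_{m+n=N+1}\sum_{i=1}^m\pm\,\eta^{m,R_0[r]}_{\alpha_1,\dots,\alpha_{i-1},\alpha_i\cdots\alpha_{i+n-1},\alpha_{i+n},\dots,\alpha_N}\big(a_1,\dots,a_{i-1},\eta^{n,R_i[r]}_{\alpha_i,\dots,\alpha_{i+n-1}}(a_i,\dots,a_{i+n-1}),a_{i+n},\dots,a_N\big)=0$. *)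

theory Defs
  imports Main "HOL.Modules"
begin

definition graded_module :: "('k::comm_ring_1 \<Rightarrow> 'v::ab_group_add \<Rightarrow> 'v) \<Rightarrow> (int \<Rightarrow> 'v set) \<Rightarrow> bool" where
  "graded_module smul G \<longleftrightarrow> module smul \<and> (\<forall>i. 0 \<in> G i \<and> (\<forall>x\<in>G i. \<forall>y\<in>G i. x + y \<in> G i) \<and> (\<forall>c. \<forall>x\<in>G i. smul c x \<in> G i)) \<and>
     (\<forall>v. \<exists>!f. finite {i. f i \<noteq> 0} \<and> (\<forall>i. f i \<in> G i) \<and> v = sum f {i. f i \<noteq> 0})"

definition multilinear :: "('k::comm_ring_1 \<Rightarrow> 'v::ab_group_add \<Rightarrow> 'v) \<Rightarrow> nat \<Rightarrow> ('v list \<Rightarrow> 'v) \<Rightarrow> bool" where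
  "multilinear smul k f \<longleftrightarrow> (\<forall>xs j. length xs = k \<longrightarrow> j < k \<longrightarrow> module_hom smul smul (\<lambda>x. f (xs[j := x])))"

definition has_degree :: "(int \<Rightarrow> 'v set) \<Rightarrow> nat \<Rightarrow> ('v list \<Rightarrow> 'v) \<Rightarrow> int \<Rightarrow> bool" where
  "has_degree G k f e \<longleftrightarrow> (\<forall>ds as. length ds = k \<longrightarrow> length as = k \<longrightarrow>
      (\<forall>j<k. as ! j \<in> G (ds ! j)) \<longrightarrow> f as \<in> G (sum_list ds + e))"

definition sgn_act :: "int \<Rightarrow> 'v::ab_group_add \<Rightarrow> 'v" where
  "sgn_act e x = (if even e then x else - x)"

text \<open>The sign (-1)^(i(n+1) + n(|a_1|+...+|a_{i-1}|)), i is 1-based.\<close>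
definition Ainf_sign :: "nat \<Rightarrow> nat \<Rightarrow> int list \<Rightarrow> int" where
  "Ainf_sign i n ds = int i * (int n + 1) + int n * sum_list (take (i - 1) ds)"

text \<open>Insert the inner result: (a_1,...,a_{i-1}, x, a_{i+n},...,a_N) (i 1-based).\<close>
definition ins_block :: "nat \<Rightarrow> nat \<Rightarrow> 'a list \<Rightarrow> 'a \<Rightarrow> 'a list" where
  "ins_block i n xs x = take (i - 1) xs @ [x] @ drop (i - 1 + n) xs"

definition block :: "nat \<Rightarrow> nat \<Rightarrow> 'a list \<Rightarrow> 'a list" where
  "block i n xs = take n (drop (i - 1) xs)"

fun sprod :: "'w::semigroup_mult list \<Rightarrow> 'w" where
  "sprod [] = undefined"
| "sprod [x] = x"
| "sprod (x # y # xs) = x * sprod (y # xs)"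

definition A_infinity :: "('k::comm_ring_1 \<Rightarrow> 'v::ab_group_add \<Rightarrow> 'v) \<Rightarrow> (int \<Rightarrow> 'v set) \<Rightarrow> (nat \<Rightarrow> 'v list \<Rightarrow> 'v) \<Rightarrow> bool" where
  "A_infinity smul G \<mu> \<longleftrightarrow> graded_module smul G \<and>
     (\<forall>k\<ge>1. multilinear smul k (\<mu> k) \<and> has_degree G k (\<mu> k) (int k - 2)) \<and>
     (\<forall>N\<ge>1. \<forall>ds as. length ds = N \<longrightarrow> length as = N \<longrightarrow> (\<forall>j<N. as ! j \<in> G (ds ! j)) \<longrightarrow>
        (\<Sum>m\<in>{1..N}. \<Sum>i\<in>{1..m}. let n = N + 1 - m in
           sgn_act (Ainf_sign i n ds) (\<mu> m (ins_block i n as (\<mu> n (block i n as))))) = 0)"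

definition homotopy_RB_family :: "('k::comm_ring_1 \<Rightarrow> 'v::ab_group_add \<Rightarrow> 'v) \<Rightarrow> (int \<Rightarrow> 'v set) \<Rightarrow> (nat \<Rightarrow> 'v list \<Rightarrow> 'v) \<Rightarrow> ('w::semigroup_mult \<Rightarrow> 'v \<Rightarrow> 'v) \<Rightarrow> bool" where
  "homotopy_RB_family smul G \<mu> R \<longleftrightarrow>
     (\<forall>\<alpha>. module_hom smul smul (R \<alpha>) \<and> (\<forall>d. \<forall>a\<in>G d. R \<alpha> a \<in> G d)) \<and>
     (\<forall>k\<ge>1. \<forall>\<alpha>s as. length \<alpha>s = k \<longrightarrow> length as = k \<longrightarrow>
        \<mu> k (map (\<lambda>j. R (\<alpha>s ! j) (as ! j)) [0..<k]) =
        R (sprod \<alpha>s) (\<Sum>r\<in>{1..k}. \<mu> k (map (\<lambda>j. if j = r - 1 then as ! j else R (\<alpha>s ! j) (as ! j)) [0..<k])))"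

text \<open>The relabelling maps R_0 and R_i; R_i[r] is returned as a set of labels, the set
  {1..n} standing for [1]+...+[n].\<close>
definition R0_lab :: "nat \<Rightarrow> nat \<Rightarrow> nat \<Rightarrow> nat" where
  "R0_lab i n r = (if r \<le> i - 1 then r else if r \<le> i + n - 1 then i else r - n + 1)"

definition Ri_lab :: "nat \<Rightarrow> nat \<Rightarrow> nat \<Rightarrow> nat set" where
  "Ri_lab i n r = (if i \<le> r \<and> r \<le> i + n - 1 then {r - i + 1} else {1..n})"

text \<open>eta k r alphas as = eta^{k,[r]}_{alpha_1..alpha_k}(a_1..a_k), r 1-based.\<close>
definition Dend_inf_family :: "('k::comm_ring_1 \<Rightarrow> 'v::ab_group_add \<Rightarrow> 'v) \<Rightarrow> (int \<Rightarrow> 'v set) \<Rightarrow> (nat \<Rightarrow> nat \<Rightarrow> 'w::semigroup_mult list \<Rightarrow> 'v list \<Rightarrow> 'v) \<Rightarrow> bool" where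
  "Dend_inf_family smul G \<eta> \<longleftrightarrow> graded_module smul G \<and>
     (\<forall>k\<ge>1. \<forall>r\<in>{1..k}. \<forall>\<alpha>s. length \<alpha>s = k \<longrightarrow>
        multilinear smul k (\<eta> k r \<alpha>s) \<and> has_degree G k (\<eta> k r \<alpha>s) (int k - 2) \<and>
        (\<forall>\<beta>. \<eta> k r (\<alpha>s[r - 1 := \<beta>]) = \<eta> k r \<alpha>s)) \<and>
     (\<forall>N\<ge>1. \<forall>r\<in>{1..N}. \<forall>ds as \<alpha>s. length ds = N \<longrightarrow> length as = N \<longrightarrow> length \<alpha>s = N \<longrightarrow>
        (\<forall>j<N. as ! j \<in> G (ds ! j)) \<longrightarrow>
        (\<Sum>m\<in>{1..N}. \<Sum>i\<in>{1..m}. let n = N + 1 - m in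
           sgn_act (Ainf_sign i n ds)
             (\<eta> m (R0_lab i n r) (ins_block i n \<alpha>s (sprod (block i n \<alpha>s)))
                (ins_block i n as (\<Sum>s\<in>Ri_lab i n r. \<eta> n s (block i n \<alpha>s) (block i n as))))) = 0)"

end

theory Submission
  imports Defs
begin

(* Put b_j = R_{alpha_j}(a_j) for j <> r and b_r = a_r. Every term of the Dend_infinity
   relation with output label [r] equals the term of the A_infinity relation for b_1, ..., b_N
   with the same m, i and sign. When a_r lies in the inner block this is only a relabelling.
   Otherwise the inner block consists of R-images, and the homotopy Rota-Baxter identity
   rewrites mu^n of it as R_{alpha_i ... alpha_(i+n-1)} applied to the sum of all eta^{n,[s]},
   which is the label R_i[r] = [1] + ... + [n]. So the Dend_infinity relation at a is the
   A_infinity relation at b. *)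

lemma length_block: "i - 1 + n \<le> length xs \<Longrightarrow> length (block i n xs) = n"
  by (simp add: block_def)

lemma length_ins_block: "i - 1 + n \<le> length xs \<Longrightarrow> length (ins_block i n xs x) = length xs + 1 - n"
  by (simp add: ins_block_def)

lemma block_map: "block i n (map f xs) = map f (block i n xs)"
  by (simp add: block_def drop_map take_map)

lemma ins_block_map: "ins_block i n (map f xs) (f x) = map f (ins_block i n xs x)"
  by (simp add: ins_block_def drop_map take_map)

lemma block_map2: "block i n (map2 h xs ys) = map2 h (block i n xs) (block i n ys)"
  by (simp add: block_def take_map drop_map take_zip drop_zip)

lemma ins_block_map2:
  "length xs = length ys \<Longrightarrow>
   ins_block i n (map2 h xs ys) (h x y) = map2 h (ins_block i n xs x) (ins_block i n ys y)"
  by (simp add: ins_block_def take_map drop_map take_zip drop_zip)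

lemma block_list_update_inside:
  "i - 1 \<le> p \<Longrightarrow> p < i - 1 + n \<Longrightarrow> block i n (xs[p := v]) = (block i n xs)[p - (i - 1) := v]"
  by (simp add: block_def drop_update_swap take_update_swap)

lemma block_list_update_outside:
  "p < i - 1 \<or> i - 1 + n \<le> p \<Longrightarrow> block i n (xs[p := v]) = block i n xs"
  by (auto simp add: block_def drop_update_swap take_update_swap list_update_beyond)

lemma ins_block_list_update_inside:
  "i - 1 \<le> p \<Longrightarrow> p < i - 1 + n \<Longrightarrow> ins_block i n (xs[p := v]) x = ins_block i n xs x"
  by (simp add: ins_block_def drop_update_swap take_update_swap list_update_beyond)

lemma ins_block_list_update_before:
  "p < i - 1 \<Longrightarrow> i - 1 \<le> length xs \<Longrightarrow> ins_block i n (xs[p := v]) x = (ins_block i n xs x)[p := v]"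
  by (simp add: ins_block_def take_update_swap list_update_append1)

lemma ins_block_list_update_after:
  assumes "i - 1 + n \<le> p" and "i - 1 \<le> length xs"
  shows "ins_block i n (xs[p := v]) x = (ins_block i n xs x)[p + 1 - n := v]"
proof -
  have "p + 1 - n - (i - 1) = Suc (p - (i - 1 + n))"
    using assms(1) by linarith
  then show ?thesis
    using assms by (simp add: ins_block_def drop_update_swap take_update_swap list_update_append list_update_beyond)
qed

lemma ins_block_update_centre:
  "i - 1 \<le> length xs \<Longrightarrow> (ins_block i n xs x)[i - 1 := y] = ins_block i n xs y"
  by (simp add: ins_block_def list_update_append)

definition R_except :: "('w \<Rightarrow> 'v \<Rightarrow> 'v) \<Rightarrow> nat \<Rightarrow> 'w list \<Rightarrow> 'v list \<Rightarrow> nat \<Rightarrow> 'v list" where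
  "R_except R r \<alpha>s as k = map (\<lambda>j. if j = r - 1 then as ! j else R (\<alpha>s ! j) (as ! j)) [0..<k]"

lemma length_R_except [simp]: "length (R_except R r \<alpha>s as k) = k"
  by (simp add: R_except_def)

lemma R_except_update_label: "p = r - 1 \<Longrightarrow> R_except R r (\<alpha>s[p := \<beta>]) as k = R_except R r \<alpha>s as k"
  by (auto simp add: R_except_def nth_list_update)

lemma R_except_list_update:
  "length xs = k \<Longrightarrow> j < k \<Longrightarrow>
   R_except R r \<alpha>s (xs[j := x]) k = (R_except R r \<alpha>s xs k)[j := (if j = r - 1 then id else R (\<alpha>s ! j)) x]"
  by (rule nth_equalityI) (auto simp add: R_except_def nth_list_update)

(* Seen as the operator list (R_{alpha_1}, ..., id, ..., R_{alpha_k}) applied pointwise,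
   R_except commutes with block and ins_block, and only the position of id needs tracking. *)
lemma R_except_conv_map2:
  "length \<alpha>s = k \<Longrightarrow> length as = k \<Longrightarrow>
   R_except R r \<alpha>s as k = map2 (\<lambda>f x. f x) ((map R \<alpha>s)[r - 1 := id]) as"
  by (rule nth_equalityI) (auto simp add: R_except_def nth_list_update)

lemma multilinear_R_except:
  fixes R :: "'w \<Rightarrow> 'v::ab_group_add \<Rightarrow> 'v"
  assumes "module smul" and "multilinear smul k f" and "\<And>\<alpha>. module_hom smul smul (R \<alpha>)"
  shows "multilinear smul k (\<lambda>as. f (R_except R r \<alpha>s as k))"
  unfolding multilinear_def
proof (intro allI impI)
  fix xs :: "'v list" and j
  assume "length xs = k" and "j < k"
  then have "(\<lambda>x. f (R_except R r \<alpha>s (xs[j := x]) k)) =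
      (\<lambda>y. f ((R_except R r \<alpha>s xs k)[j := y])) \<circ> (if j = r - 1 then id else R (\<alpha>s ! j))"
    by (simp add: R_except_list_update comp_def)
  moreover have "module_hom smul smul (if j = r - 1 then id else R (\<alpha>s ! j))"
    using assms(1,3) module.module_hom_id by auto
  moreover have "module_hom smul smul (\<lambda>y. f ((R_except R r \<alpha>s xs k)[j := y]))"
    using assms(2) \<open>j < k\<close> by (simp add: multilinear_def)
  ultimately show "module_hom smul smul (\<lambda>x. f (R_except R r \<alpha>s (xs[j := x]) k))"
    by (simp add: module_hom_compose)
qed

lemma R_except_in_grading:
  assumes "\<And>\<alpha> d a. a \<in> G d \<Longrightarrow> R \<alpha> a \<in> G d" and "\<forall>j<k. as ! j \<in> G (ds ! j)"
  shows "\<forall>j<k. R_except R r \<alpha>s as k ! j \<in> G (ds ! j)"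
  using assms by (simp add: R_except_def)

lemma has_degree_R_except:
  assumes "has_degree G k f e" and "\<And>\<alpha> d a. a \<in> G d \<Longrightarrow> R \<alpha> a \<in> G d"
  shows "has_degree G k (\<lambda>as. f (R_except R r \<alpha>s as k)) e"
  unfolding has_degree_def
proof (intro allI impI)
  fix ds as
  assume "length ds = k" and "length as = k" and "\<forall>j<k. as ! j \<in> G (ds ! j)"
  then show "f (R_except R r \<alpha>s as k) \<in> G (sum_list ds + e)"
    using assms(1) R_except_in_grading[of G R] assms(2) by (simp add: has_degree_def)
qed

lemma block_R_except_inside:
  assumes "length \<alpha>s = N" and "length as = N" and "i - 1 + n \<le> N"
    and "1 \<le> i" and "i \<le> r" and "r < i + n"
  shows "block i n (R_except R r \<alpha>s as N) = R_except R (r - i + 1) (block i n \<alpha>s) (block i n as) n"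
proof -
  have "block i n ((map R \<alpha>s)[r - 1 := id]) = (map R (block i n \<alpha>s))[r - i := id]"
    using assms(4-6) by (simp add: block_list_update_inside block_map)
  then show ?thesis
    using assms(1-3) by (simp add: R_except_conv_map2 length_block block_map2)
qed

lemma ins_block_R_except_inside:
  assumes "length \<alpha>s = N" and "length as = N" and "i - 1 + n \<le> N"
    and "1 \<le> i" and "i \<le> r" and "r < i + n"
  shows "ins_block i n (R_except R r \<alpha>s as N) x =
    R_except R i (ins_block i n \<alpha>s S) (ins_block i n as x) (N + 1 - n)"
proof -
  have "ins_block i n ((map R \<alpha>s)[r - 1 := id]) id = ins_block i n (map R \<alpha>s) id"
    using assms(4-6) by (simp add: ins_block_list_update_inside)
  also have "\<dots> = (ins_block i n (map R \<alpha>s) (R S))[i - 1 := id]"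
    using assms(1,3) ins_block_update_centre[of i "map R \<alpha>s"] by simp
  also have "\<dots> = (map R (ins_block i n \<alpha>s S))[i - 1 := id]"
    by (simp add: ins_block_map)
  finally have ops:
    "ins_block i n ((map R \<alpha>s)[r - 1 := id]) id = (map R (ins_block i n \<alpha>s S))[i - 1 := id]" .
  have "ins_block i n (R_except R r \<alpha>s as N) x =
      map2 (\<lambda>f x. f x) (ins_block i n ((map R \<alpha>s)[r - 1 := id]) id) (ins_block i n as x)"
    using assms(1,2) ins_block_map2[where h = "\<lambda>f x. f x" and x = id and y = x]
    by (simp add: R_except_conv_map2)
  also have "\<dots> = map2 (\<lambda>f x. f x) ((map R (ins_block i n \<alpha>s S))[i - 1 := id]) (ins_block i n as x)"
    unfolding ops ..
  also have "\<dots> = R_except R i (ins_block i n \<alpha>s S) (ins_block i n as x) (N + 1 - n)"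
    using assms(1-3) by (simp add: R_except_conv_map2 length_ins_block)
  finally show ?thesis .
qed

lemma block_R_except_outside:
  assumes "length \<alpha>s = N" and "length as = N" and "i - 1 + n \<le> N"
    and "1 \<le> i" and "1 \<le> r" and "r < i \<or> i + n \<le> r"
  shows "block i n (R_except R r \<alpha>s as N) = map2 (\<lambda>f x. f x) (map R (block i n \<alpha>s)) (block i n as)"
proof -
  have "r - 1 < i - 1 \<or> i - 1 + n \<le> r - 1"
    using assms(4-6) by linarith
  then have "block i n ((map R \<alpha>s)[r - 1 := id]) = map R (block i n \<alpha>s)"
    by (simp only: block_list_update_outside block_map)
  then show ?thesis
    using assms(1,2) by (simp add: R_except_conv_map2 block_map2)
qed

lemma ins_block_R_except_outside:
  assumes "length \<alpha>s = N" and "length as = N" and "i - 1 + n \<le> N"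
    and "1 \<le> i" and "1 \<le> r" and "r < i \<or> i + n \<le> r"
  shows "ins_block i n (R_except R r \<alpha>s as N) (R S y) =
    R_except R (R0_lab i n r) (ins_block i n \<alpha>s S) (ins_block i n as y) (N + 1 - n)"
proof -
  have ops: "ins_block i n ((map R \<alpha>s)[r - 1 := id]) (R S) =
      (map R (ins_block i n \<alpha>s S))[R0_lab i n r - 1 := id]"
  proof (cases "r < i")
    case True
    then have "r - 1 < i - 1" and "R0_lab i n r = r"
      using assms(5) by (auto simp add: R0_lab_def)
    moreover have "i - 1 \<le> length (map R \<alpha>s)"
      using assms(1,3) by simp
    ultimately show ?thesis
      by (simp only: ins_block_list_update_before ins_block_map)
  next
    case False
    then have "i - 1 + n \<le> r - 1" and "R0_lab i n r - 1 = r - 1 + 1 - n"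
      using assms(4-6) by (auto simp add: R0_lab_def)
    moreover have "i - 1 \<le> length (map R \<alpha>s)"
      using assms(1,3) by simp
    ultimately show ?thesis
      by (simp only: ins_block_list_update_after ins_block_map)
  qed
  have "ins_block i n (R_except R r \<alpha>s as N) (R S y) =
      map2 (\<lambda>f x. f x) (ins_block i n ((map R \<alpha>s)[r - 1 := id]) (R S)) (ins_block i n as y)"
    using assms(1,2) ins_block_map2[where h = "\<lambda>f x. f x" and x = "R S" and y = y]
    by (simp add: R_except_conv_map2)
  also have "\<dots> = map2 (\<lambda>f x. f x) ((map R (ins_block i n \<alpha>s S))[R0_lab i n r - 1 := id]) (ins_block i n as y)"
    unfolding ops ..
  also have "\<dots> = R_except R (R0_lab i n r) (ins_block i n \<alpha>s S) (ins_block i n as y) (N + 1 - n)"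
    using assms(1-3) by (simp add: R_except_conv_map2 length_ins_block)
  finally show ?thesis .
qed

lemma A_infinity_relation:
  assumes "A_infinity smul G \<mu>" and "1 \<le> N" and "length ds = N" and "length as = N"
    and "\<forall>j<N. as ! j \<in> G (ds ! j)"
  shows "(\<Sum>m\<in>{1..N}. \<Sum>i\<in>{1..m}. let n = N + 1 - m in
           sgn_act (Ainf_sign i n ds) (\<mu> m (ins_block i n as (\<mu> n (block i n as))))) = 0"
  using assms unfolding A_infinity_def by simp

lemma homotopy_RB_family_grading: "homotopy_RB_family smul G \<mu> R \<Longrightarrow> a \<in> G d \<Longrightarrow> R \<alpha> a \<in> G d"
  by (simp add: homotopy_RB_family_def)

lemma homotopy_RB_family_module_hom: "homotopy_RB_family smul G \<mu> R \<Longrightarrow> module_hom smul smul (R \<alpha>)"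
  by (simp add: homotopy_RB_family_def)

lemma homotopy_RB_family_expand:
  assumes "homotopy_RB_family smul G \<mu> R" and "length \<alpha>s = n" and "length as = n" and "1 \<le> n"
  shows "\<mu> n (map2 (\<lambda>f x. f x) (map R \<alpha>s) as) = R (sprod \<alpha>s) (\<Sum>s\<in>{1..n}. \<mu> n (R_except R s \<alpha>s as n))"
proof -
  have "map2 (\<lambda>f x. f x) (map R \<alpha>s) as = map (\<lambda>j. R (\<alpha>s ! j) (as ! j)) [0..<n]"
    using assms(2,3) by (intro nth_equalityI) auto
  then show ?thesis
    using assms unfolding homotopy_RB_family_def R_except_def by auto
qed

lemma Dend_term_eq_A_infinity_term:
  assumes RB: "homotopy_RB_family smul G \<mu> R"
    and "length \<alpha>s = N" and "length as = N"
    and "1 \<le> i" and "i \<le> m" and "m \<le> N" and n: "n = N + 1 - m" and "1 \<le> r"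
  defines "bs \<equiv> R_except R r \<alpha>s as N"
  shows "\<mu> m (R_except R (R0_lab i n r) (ins_block i n \<alpha>s (sprod (block i n \<alpha>s)))
           (ins_block i n as (\<Sum>s\<in>Ri_lab i n r. \<mu> n (R_except R s (block i n \<alpha>s) (block i n as) n))) m)
    = \<mu> m (ins_block i n bs (\<mu> n (block i n bs)))"
proof -
  have fits: "i - 1 + n \<le> N" and m: "m = N + 1 - n" and "1 \<le> n"
    using assms(4-7) by auto
  show ?thesis
  proof (cases "i \<le> r \<and> r < i + n")
    case True
    then have inside: "i \<le> r" "r < i + n" by auto
    have "Ri_lab i n r = {r - i + 1}" and "R0_lab i n r = i"
      using inside by (auto simp add: Ri_lab_def R0_lab_def)
    then show ?thesis
      using block_R_except_inside[OF assms(2,3) fits assms(4) inside]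
        ins_block_R_except_inside[OF assms(2,3) fits assms(4) inside]
      unfolding bs_def m by simp
  next
    case False
    then have outside: "r < i \<or> i + n \<le> r" by auto
    then have "Ri_lab i n r = {1..n}"
      using \<open>1 \<le> n\<close> by (auto simp add: Ri_lab_def)
    moreover have "\<mu> n (block i n bs) =
        R (sprod (block i n \<alpha>s)) (\<Sum>s\<in>{1..n}. \<mu> n (R_except R s (block i n \<alpha>s) (block i n as) n))"
      using homotopy_RB_family_expand[OF RB] block_R_except_outside[OF assms(2,3) fits assms(4,8) outside]
        assms(2,3,5-7) fits unfolding bs_def by (simp add: length_block)
    ultimately show ?thesis
      using ins_block_R_except_outside[OF assms(2,3) fits assms(4,8) outside] unfolding bs_def m
      by simp
  qed
qed

lemma R_except_Dend_relation:
  assumes A: "A_infinity smul G \<mu>" and RB: "homotopy_RB_family smul G \<mu> R"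
    and "1 \<le> r" and "r \<le> N" and "length ds = N" and "length as = N" and "length \<alpha>s = N"
    and "\<forall>j<N. as ! j \<in> G (ds ! j)"
  shows "(\<Sum>m\<in>{1..N}. \<Sum>i\<in>{1..m}. let n = N + 1 - m in
           sgn_act (Ainf_sign i n ds)
             (\<mu> m (R_except R (R0_lab i n r) (ins_block i n \<alpha>s (sprod (block i n \<alpha>s)))
                (ins_block i n as (\<Sum>s\<in>Ri_lab i n r. \<mu> n (R_except R s (block i n \<alpha>s) (block i n as) n))) m))) = 0"
    (is "?Dend = 0")
proof -
  define bs where "bs = R_except R r \<alpha>s as N"
  have "?Dend = (\<Sum>m\<in>{1..N}. \<Sum>i\<in>{1..m}. let n = N + 1 - m in
           sgn_act (Ainf_sign i n ds) (\<mu> m (ins_block i n bs (\<mu> n (block i n bs)))))"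
    unfolding Let_def bs_def
    using Dend_term_eq_A_infinity_term[OF RB assms(7,6) _ _ _ refl assms(3)]
    by (intro sum.cong refl) auto
  also have "\<dots> = 0"
  proof (rule A_infinity_relation[OF A])
    show "\<forall>j<N. bs ! j \<in> G (ds ! j)"
      unfolding bs_def using homotopy_RB_family_grading[OF RB] assms(8) by (rule R_except_in_grading)
  qed (use assms(3-5) bs_def in auto)
  finally show ?thesis .
qed

theorem theorem5p13:
  fixes smul :: "'k::{comm_ring_1, ring_char_0} \<Rightarrow> 'v::ab_group_add \<Rightarrow> 'v"
    and G :: "int \<Rightarrow> 'v set"
    and \<mu> :: "nat \<Rightarrow> 'v list \<Rightarrow> 'v"
    and R :: "'w::semigroup_mult \<Rightarrow> 'v \<Rightarrow> 'v"
  assumes "A_infinity smul G \<mu>"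
    and "homotopy_RB_family smul G \<mu> R"
  shows "Dend_inf_family smul G
           (\<lambda>k r \<alpha>s as. \<mu> k (map (\<lambda>j. if j = r - 1 then as ! j else R (\<alpha>s ! j) (as ! j)) [0..<k]))"
proof -
  have graded: "graded_module smul G" and "module smul"
    using assms(1) by (simp_all add: A_infinity_def graded_module_def)
  have "multilinear smul k (\<lambda>as. \<mu> k (R_except R r \<alpha>s as k))"
    and "has_degree G k (\<lambda>as. \<mu> k (R_except R r \<alpha>s as k)) (int k - 2)"
    if "1 \<le> k" for k r \<alpha>s
    using assms that \<open>module smul\<close>
    by (auto simp add: A_infinity_def intro: multilinear_R_except has_degree_R_except
        homotopy_RB_family_module_hom homotopy_RB_family_grading)
  then show ?thesis
    unfolding Dend_inf_family_def R_except_def[symmetric]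
    using graded R_except_Dend_relation[OF assms] by (simp add: R_except_update_label)
qed

end
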